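(* If $L$ is a finite modular i--lattice, in particular if $L$ is a finite De Morgan algebra, in particular if $L$ is a finite Kleene algebra, then ${\rm Con}_{\mathbb{BI}}(L)$ is a Boolean algebra; in particular its cardinality is a natural power of $2$.
   Context: An i--lattice is a lattice $L$ with a unary operation $'$ such that $a''=a$ and $a\leq b$ implies $b'\leq a'$. A De Morgan algebra is a distributive bounded i--lattice; a Kleene algebra is a De Morgan algebra satisfying $a\wedge a'\leq b\vee b'$ for all $a,b$. ${\rm Con}_{\mathbb{BI}}(L)$ is the lattice of congruences of $L$ with respect to $\vee,\wedge,'$ (and the bounds, which does not change the congruences), i.e. lattice congruences $\theta$ such that $(a,b)\in\theta$ implies $(a',b')\in\theta$. *)

theory Defs
  imports Main
begin

definition i_lattice_inv :: "('a::lattice \<Rightarrow> 'a) \<Rightarrow> bool" where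
  "i_lattice_inv n \<longleftrightarrow> (\<forall>a. n (n a) = a) \<and> (\<forall>a b. a \<le> b \<longrightarrow> n b \<le> n a)"

definition modular_lattice :: "'a::lattice itself \<Rightarrow> bool" where
  "modular_lattice _ \<longleftrightarrow> (\<forall>a b c::'a. a \<le> c \<longrightarrow> sup a (inf b c) = inf (sup a b) c)"

text \<open>Congruences of (L, sup, inf, n): equivalence relations on L compatible with
  sup, inf and the involution n (bounds are constants, adding them changes nothing).\<close>
definition ConBI :: "('a::lattice \<Rightarrow> 'a) \<Rightarrow> ('a \<times> 'a) set set" where
  "ConBI n = {\<theta>. equiv UNIV \<theta> \<and>
     (\<forall>a b c d. (a, b) \<in> \<theta> \<and> (c, d) \<in> \<theta> \<longrightarrow> (sup a c, sup b d) \<in> \<theta> \<and> (inf a c, inf b d) \<in> \<theta>) \<and>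
     (\<forall>a b. (a, b) \<in> \<theta> \<longrightarrow> (n a, n b) \<in> \<theta>)}"

definition is_lub_in :: "'b set set \<Rightarrow> 'b set \<Rightarrow> 'b set \<Rightarrow> 'b set \<Rightarrow> bool" where
  "is_lub_in S x y z \<longleftrightarrow> z \<in> S \<and> x \<subseteq> z \<and> y \<subseteq> z \<and> (\<forall>w\<in>S. x \<subseteq> w \<and> y \<subseteq> w \<longrightarrow> z \<subseteq> w)"

definition is_glb_in :: "'b set set \<Rightarrow> 'b set \<Rightarrow> 'b set \<Rightarrow> 'b set \<Rightarrow> bool" where
  "is_glb_in S x y z \<longleftrightarrow> z \<in> S \<and> z \<subseteq> x \<and> z \<subseteq> y \<and> (\<forall>w\<in>S. w \<subseteq> x \<and> w \<subseteq> y \<longrightarrow> w \<subseteq> z)"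

definition join_in :: "'b set set \<Rightarrow> 'b set \<Rightarrow> 'b set \<Rightarrow> 'b set" where
  "join_in S x y = (THE z. is_lub_in S x y z)"

definition meet_in :: "'b set set \<Rightarrow> 'b set \<Rightarrow> 'b set \<Rightarrow> 'b set" where
  "meet_in S x y = (THE z. is_glb_in S x y z)"

definition boolean_lattice_on :: "'b set set \<Rightarrow> bool" where
  "boolean_lattice_on S \<longleftrightarrow>
     (\<forall>x\<in>S. \<forall>y\<in>S. (\<exists>z. is_lub_in S x y z) \<and> (\<exists>z. is_glb_in S x y z)) \<and>
     (\<exists>bot\<in>S. \<exists>top\<in>S. (\<forall>x\<in>S. bot \<subseteq> x \<and> x \<subseteq> top) \<and>
        (\<forall>x\<in>S. \<exists>y\<in>S. meet_in S x y = bot \<and> join_in S x y = top)) \<and>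
     (\<forall>x\<in>S. \<forall>y\<in>S. \<forall>z\<in>S. meet_in S x (join_in S y z) = join_in S (meet_in S x y) (meet_in S x z))"

end

theory Submission
  imports Defs
begin

text \<open>
  Congruences of a lattice form a distributive lattice: the join of \<open>\<phi>\<close> and \<open>\<psi>\<close> is the
  reflexive transitive closure of \<open>\<phi> \<union> \<psi>\<close>, and a chain from \<open>a\<close> to \<open>b\<close> with \<open>a \<le> b\<close> and
  \<open>(a, b) \<in> \<theta>\<close> projects by \<open>x \<mapsto> (x \<squnion> a) \<sqinter> b\<close> into \<open>[a, b]\<close>, where every step is also in \<open>\<theta>\<close>.

  For a modular lattice the complement of a congruence \<open>\<theta>\<close> is explicit: relate \<open>x\<close> and \<open>y\<close>
  when the interval \<open>[x \<sqinter> y, x \<squnion> y]\<close> contains no two distinct \<open>\<theta>\<close>-related elements.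
  Modularity makes this a lattice congruence (by cancellation, translating such an interval by
  \<open>\<squnion> w\<close> or \<open>\<sqinter> w\<close> gives another one), the involution maps such intervals to such
  intervals, it meets \<open>\<theta>\<close> in the identity, and in a finite lattice every interval splits
  into such intervals and \<open>\<theta>\<close>-collapsed ones, so the join with \<open>\<theta>\<close> is everything.

  A finite Boolean lattice \<open>C\<close> has \<open>2\<^sup>k\<close> elements: for an atom \<open>a\<close> with complement \<open>c\<close>,
  \<open>x \<mapsto> (x \<inter> a, x \<inter> c)\<close> is a bijection from \<open>C\<close> onto \<open>{\<bottom>, a} \<times> [\<bottom>, c]\<close>.
\<close>

section \<open>Finite Boolean lattices of sets\<close>

lemma join_in_eqI: "is_lub_in S x y z \<Longrightarrow> join_in S x y = z"
  unfolding join_in_def by (rule the_equality) (auto simp: is_lub_in_def intro: subset_antisym)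

lemma meet_in_eqI: "is_glb_in S x y z \<Longrightarrow> meet_in S x y = z"
  unfolding meet_in_def by (rule the_equality) (auto simp: is_glb_in_def intro: subset_antisym)

locale boolean_set_lattice =
  fixes C :: "'b set set" and J :: "'b set \<Rightarrow> 'b set \<Rightarrow> 'b set" and bot_set top_set :: "'b set"
  assumes bot_in: "bot_set \<in> C" and top_in: "top_set \<in> C"
    and bounds: "x \<in> C \<Longrightarrow> bot_set \<subseteq> x \<and> x \<subseteq> top_set"
    and Int_closed: "x \<in> C \<Longrightarrow> y \<in> C \<Longrightarrow> x \<inter> y \<in> C"
    and J_lub: "x \<in> C \<Longrightarrow> y \<in> C \<Longrightarrow> is_lub_in C x y (J x y)"
    and distrib: "x \<in> C \<Longrightarrow> y \<in> C \<Longrightarrow> z \<in> C \<Longrightarrow> x \<inter> J y z = J (x \<inter> y) (x \<inter> z)"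
    and complemented: "x \<in> C \<Longrightarrow> \<exists>y\<in>C. x \<inter> y = bot_set \<and> J x y = top_set"
begin

lemma J_in: "x \<in> C \<Longrightarrow> y \<in> C \<Longrightarrow> J x y \<in> C"
  and J_upper1: "x \<in> C \<Longrightarrow> y \<in> C \<Longrightarrow> x \<subseteq> J x y"
  and J_upper2: "x \<in> C \<Longrightarrow> y \<in> C \<Longrightarrow> y \<subseteq> J x y"
  and J_least: "x \<in> C \<Longrightarrow> y \<in> C \<Longrightarrow> z \<in> C \<Longrightarrow> x \<subseteq> z \<Longrightarrow> y \<subseteq> z \<Longrightarrow> J x y \<subseteq> z"
  using J_lub unfolding is_lub_in_def by blast+

lemma J_bot_right: "x \<in> C \<Longrightarrow> J x bot_set = x"
  and J_bot_left: "x \<in> C \<Longrightarrow> J bot_set x = x"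
  using J_upper1 J_upper2 J_least bot_in bounds by (meson subset_antisym subset_refl)+

lemma join_in_eq: "x \<in> C \<Longrightarrow> y \<in> C \<Longrightarrow> join_in C x y = J x y"
  using J_lub by (rule join_in_eqI)

lemma is_glb_in_Int: "x \<in> C \<Longrightarrow> y \<in> C \<Longrightarrow> is_glb_in C x y (x \<inter> y)"
  unfolding is_glb_in_def using Int_closed by auto

lemma meet_in_eq: "x \<in> C \<Longrightarrow> y \<in> C \<Longrightarrow> meet_in C x y = x \<inter> y"
  using is_glb_in_Int by (rule meet_in_eqI)

lemma boolean_lattice_on: "boolean_lattice_on C"
  unfolding boolean_lattice_on_def
proof (intro conjI)
  show "\<forall>x\<in>C. \<forall>y\<in>C. (\<exists>z. is_lub_in C x y z) \<and> (\<exists>z. is_glb_in C x y z)"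
    using J_lub is_glb_in_Int by blast
next
  show "\<exists>b\<in>C. \<exists>t\<in>C. (\<forall>x\<in>C. b \<subseteq> x \<and> x \<subseteq> t) \<and>
      (\<forall>x\<in>C. \<exists>y\<in>C. meet_in C x y = b \<and> join_in C x y = t)"
    using bot_in top_in bounds complemented meet_in_eq join_in_eq by metis
next
  show "\<forall>x\<in>C. \<forall>y\<in>C. \<forall>z\<in>C.
      meet_in C x (join_in C y z) = join_in C (meet_in C x y) (meet_in C x z)"
    by (simp add: meet_in_eq join_in_eq J_in Int_closed distrib)
qed

lemma boolean_set_lattice_lower_set:
  assumes c: "c \<in> C"
  shows "boolean_set_lattice {x \<in> C. x \<subseteq> c} J bot_set c"
proof
  show "bot_set \<in> {x \<in> C. x \<subseteq> c}" and "c \<in> {x \<in> C. x \<subseteq> c}"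
    using bot_in bounds c by auto
  fix x y z
  assume x: "x \<in> {x \<in> C. x \<subseteq> c}"
  then show "bot_set \<subseteq> x \<and> x \<subseteq> c" using bounds by auto
  assume y: "y \<in> {x \<in> C. x \<subseteq> c}"
  with x show "x \<inter> y \<in> {x \<in> C. x \<subseteq> c}" using Int_closed by auto
  from x y show "is_lub_in {x \<in> C. x \<subseteq> c} x y (J x y)"
    using J_lub c by (auto simp: is_lub_in_def)
  assume "z \<in> {x \<in> C. x \<subseteq> c}"
  with x y show "x \<inter> J y z = J (x \<inter> y) (x \<inter> z)" using distrib by auto
next
  fix x assume x: "x \<in> {x \<in> C. x \<subseteq> c}"
  then obtain y where y: "y \<in> C" "x \<inter> y = bot_set" "J x y = top_set" using complemented by auto
  have "J x (y \<inter> c) = c \<inter> J x y"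
    using distrib[OF c _ y(1), of x] x by (auto simp: Int_commute Int_absorb1)
  also have "\<dots> = c" using y(3) bounds c by auto
  finally show "\<exists>y'\<in>{x \<in> C. x \<subseteq> c}. x \<inter> y' = bot_set \<and> J x y' = c"
    using x y c Int_closed by (intro bexI[of _ "y \<inter> c"]) auto
qed

lemma card_eq_twice_card_lower_set:
  assumes a: "a \<in> C" "a \<noteq> bot_set" and atom: "\<And>b. b \<in> C \<Longrightarrow> b \<subseteq> a \<Longrightarrow> b = bot_set \<or> b = a"
    and c: "c \<in> C" "a \<inter> c = bot_set" "J a c = top_set"
  shows "card C = 2 * card {x \<in> C. x \<subseteq> c}"
proof -
  let ?D = "{x \<in> C. x \<subseteq> c}"
  have split: "J (x \<inter> a) (x \<inter> c) = x" if "x \<in> C" for x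
    using distrib[OF that a(1) c(1)] c(3) bounds[OF that] by auto
  have recover: "J e y \<inter> a = e \<and> J e y \<inter> c = y" if "e \<in> {bot_set, a}" "y \<in> ?D" for e y
  proof -
    have e: "e \<in> C" "e \<subseteq> a" "c \<inter> e = bot_set" using that a c bot_in bounds by auto
    have y: "y \<in> C" "a \<inter> y = bot_set" using that c bounds by auto
    have "J e y \<inter> a = J e bot_set"
      using distrib[OF a(1) e(1) y(1)] e y by (simp add: Int_commute Int_absorb1 Int_absorb2)
    moreover have "J e y \<inter> c = J bot_set y"
      using distrib[OF c(1) e(1) y(1)] e that by (simp add: Int_commute Int_absorb1 Int_absorb2)
    ultimately show ?thesis using e(1) y(1) J_bot_left J_bot_right by simp
  qed
  have "bij_betw (\<lambda>x. (x \<inter> a, x \<inter> c)) C ({bot_set, a} \<times> ?D)"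
  proof (rule bij_betw_byWitness[where f' = "\<lambda>(e, y). J e y"])
    show "(\<lambda>x. (x \<inter> a, x \<inter> c)) ` C \<subseteq> {bot_set, a} \<times> ?D"
      using atom Int_closed a c by auto
    show "(\<lambda>(e, y). J e y) ` ({bot_set, a} \<times> ?D) \<subseteq> C"
      using J_in a bot_in by auto
  qed (use split recover in auto)
  then have "card C = card ({bot_set, a} \<times> ?D)" by (rule bij_betw_same_card)
  also have "\<dots> = 2 * card ?D" using a(2) by (simp add: card_cartesian_product)
  finally show ?thesis .
qed

end

lemma card_boolean_set_lattice:
  assumes "boolean_set_lattice C J bot_set top_set" and "finite C"
  shows "\<exists>k. card C = 2 ^ k"
  using assms
proof (induction "card C" arbitrary: C top_set rule: less_induct)
  case less
  interpret boolean_set_lattice C J bot_set top_set by (fact less.prems(1))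
  show ?case
  proof (cases "C = {bot_set}")
    case True
    then show ?thesis by (intro exI[of _ 0]) simp
  next
    case False
    then obtain a where a: "a \<in> C - {bot_set}" and min: "\<And>b. b \<in> C - {bot_set} \<Longrightarrow> b \<subseteq> a \<Longrightarrow> a = b"
      using finite_has_minimal[of "C - {bot_set}"] less.prems(2) bot_in by blast
    obtain c where c: "c \<in> C" "a \<inter> c = bot_set" "J a c = top_set" using complemented a by blast
    let ?D = "{x \<in> C. x \<subseteq> c}"
    have "a \<notin> ?D" using a c by auto
    then have "card ?D < card C" using a less.prems(2) by (intro psubset_card_mono) auto
    then obtain k where "card ?D = 2 ^ k"
      using less.hyps boolean_set_lattice_lower_set[OF c(1)] less.prems(2) by fastforce
    moreover have "card C = 2 * card ?D"
      using card_eq_twice_card_lower_set[of a c] a min c by blast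
    ultimately show ?thesis by (intro exI[of _ "Suc k"]) simp
  qed
qed

section \<open>Congruences of a lattice with an involution\<close>

lemma ConBI_refl: "\<theta> \<in> ConBI n \<Longrightarrow> (a, a) \<in> \<theta>"
  by (auto simp: ConBI_def equiv_def refl_on_def)

lemma ConBI_sym: "\<theta> \<in> ConBI n \<Longrightarrow> (a, b) \<in> \<theta> \<Longrightarrow> (b, a) \<in> \<theta>"
  by (auto simp: ConBI_def equiv_def sym_def)

lemma ConBI_trans: "\<theta> \<in> ConBI n \<Longrightarrow> (a, b) \<in> \<theta> \<Longrightarrow> (b, c) \<in> \<theta> \<Longrightarrow> (a, c) \<in> \<theta>"
  unfolding ConBI_def equiv_def by (auto elim: transE)

lemma ConBI_sup: "\<theta> \<in> ConBI n \<Longrightarrow> (a, b) \<in> \<theta> \<Longrightarrow> (c, d) \<in> \<theta> \<Longrightarrow> (sup a c, sup b d) \<in> \<theta>"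
  by (auto simp: ConBI_def)

lemma ConBI_inf: "\<theta> \<in> ConBI n \<Longrightarrow> (a, b) \<in> \<theta> \<Longrightarrow> (c, d) \<in> \<theta> \<Longrightarrow> (inf a c, inf b d) \<in> \<theta>"
  by (auto simp: ConBI_def)

lemma ConBI_inv: "\<theta> \<in> ConBI n \<Longrightarrow> (a, b) \<in> \<theta> \<Longrightarrow> (n a, n b) \<in> \<theta>"
  by (auto simp: ConBI_def)

lemma ConBI_intro:
  assumes "refl \<theta>" "sym \<theta>" "trans \<theta>"
    and "\<And>a b c. (a, b) \<in> \<theta> \<Longrightarrow> (sup a c, sup b c) \<in> \<theta>"
    and "\<And>a b c. (a, b) \<in> \<theta> \<Longrightarrow> (inf a c, inf b c) \<in> \<theta>"
    and "\<And>a b. (a, b) \<in> \<theta> \<Longrightarrow> (n a, n b) \<in> \<theta>"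
  shows "\<theta> \<in> ConBI n"
proof -
  have "(sup a c, sup b d) \<in> \<theta> \<and> (inf a c, inf b d) \<in> \<theta>" if "(a, b) \<in> \<theta>" "(c, d) \<in> \<theta>" for a b c d
    using assms(4)[OF that(1), of c] assms(4)[OF that(2), of b]
      assms(5)[OF that(1), of c] assms(5)[OF that(2), of b] \<open>trans \<theta>\<close>
    by (auto simp: sup_commute inf_commute elim: transE)
  then show ?thesis using assms(1-3,6) by (auto simp: ConBI_def equiv_def)
qed

lemma ConBI_Id: "Id \<in> ConBI n"
  by (rule ConBI_intro) (auto simp: refl_on_def sym_def trans_def)

lemma ConBI_UNIV: "UNIV \<in> ConBI n"
  by (rule ConBI_intro) (auto simp: refl_on_def sym_def trans_def)

lemma ConBI_Int: "\<theta> \<in> ConBI n \<Longrightarrow> \<phi> \<in> ConBI n \<Longrightarrow> \<theta> \<inter> \<phi> \<in> ConBI n"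
  by (rule ConBI_intro)
    (auto simp: refl_on_def sym_def trans_def
      intro: ConBI_refl ConBI_sym ConBI_trans ConBI_sup ConBI_inf ConBI_inv)

lemma ConBI_iff_inf_sup:
  assumes "\<theta> \<in> ConBI n"
  shows "(a, b) \<in> \<theta> \<longleftrightarrow> (inf a b, sup a b) \<in> \<theta>"
proof
  assume "(a, b) \<in> \<theta>"
  then have "(inf a b, inf b b) \<in> \<theta>" and "(sup b b, sup a b) \<in> \<theta>"
    using assms by (blast intro: ConBI_inf ConBI_sup ConBI_refl ConBI_sym)+
  then show "(inf a b, sup a b) \<in> \<theta>" using assms ConBI_trans by fastforce
next
  assume h: "(inf a b, sup a b) \<in> \<theta>"
  have "(inf a (inf a b), inf a (sup a b)) \<in> \<theta>" "(inf b (inf a b), inf b (sup a b)) \<in> \<theta>"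
    using ConBI_inf[OF assms ConBI_refl[OF assms] h] by blast+
  then have "(inf a b, a) \<in> \<theta>" "(inf a b, b) \<in> \<theta>"
    by (simp_all add: inf_absorb1 inf_absorb2 inf_commute inf_left_commute)
  then show "(a, b) \<in> \<theta>" using assms ConBI_sym ConBI_trans by metis
qed

definition cong_join :: "('b \<times> 'b) set \<Rightarrow> ('b \<times> 'b) set \<Rightarrow> ('b \<times> 'b) set" where
  "cong_join \<theta> \<phi> = (\<theta> \<union> \<phi>)\<^sup>*"

lemma rtrancl_map:
  assumes "(a, b) \<in> R\<^sup>*" and "\<And>x y. (x, y) \<in> R \<Longrightarrow> (f x, f y) \<in> R"
  shows "(f a, f b) \<in> R\<^sup>*"
  using assms(1) by induction (auto intro: rtrancl_into_rtrancl assms(2))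

lemma ConBI_cong_join:
  assumes \<theta>: "\<theta> \<in> ConBI n" and \<phi>: "\<phi> \<in> ConBI n"
  shows "cong_join \<theta> \<phi> \<in> ConBI n"
  unfolding cong_join_def
proof (rule ConBI_intro)
  show "refl ((\<theta> \<union> \<phi>)\<^sup>*)" by (simp add: refl_rtrancl)
  have "sym (\<theta> \<union> \<phi>)" using assms by (auto simp: sym_def intro: ConBI_sym)
  then show "sym ((\<theta> \<union> \<phi>)\<^sup>*)" by (rule sym_rtrancl)
  show "trans ((\<theta> \<union> \<phi>)\<^sup>*)" by (rule trans_rtrancl)
  show "(sup a c, sup b c) \<in> (\<theta> \<union> \<phi>)\<^sup>*" "(inf a c, inf b c) \<in> (\<theta> \<union> \<phi>)\<^sup>*"
    if "(a, b) \<in> (\<theta> \<union> \<phi>)\<^sup>*" for a b c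
    using rtrancl_map[OF that, of "\<lambda>x. sup x c"] rtrancl_map[OF that, of "\<lambda>x. inf x c"] assms
    by (blast intro: ConBI_sup ConBI_inf ConBI_refl)+
  show "(n a, n b) \<in> (\<theta> \<union> \<phi>)\<^sup>*" if "(a, b) \<in> (\<theta> \<union> \<phi>)\<^sup>*" for a b
    using rtrancl_map[OF that, of n] assms by (blast intro: ConBI_inv)
qed

lemma cong_join_least:
  assumes \<chi>: "\<chi> \<in> ConBI n" and "\<theta> \<subseteq> \<chi>" "\<phi> \<subseteq> \<chi>"
  shows "cong_join \<theta> \<phi> \<subseteq> \<chi>"
proof (clarsimp simp: cong_join_def)
  fix a b assume "(a, b) \<in> (\<theta> \<union> \<phi>)\<^sup>*"
  then show "(a, b) \<in> \<chi>"
    by induction (use assms in \<open>auto intro: ConBI_refl ConBI_trans\<close>)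
qed

lemma is_lub_in_cong_join:
  "\<theta> \<in> ConBI n \<Longrightarrow> \<phi> \<in> ConBI n \<Longrightarrow> is_lub_in (ConBI n) \<theta> \<phi> (cong_join \<theta> \<phi>)"
  unfolding is_lub_in_def using ConBI_cong_join[of \<theta> n \<phi>] cong_join_least[of _ n \<theta> \<phi>]
  by (auto simp: cong_join_def)

lemma cong_join_projection:
  assumes \<theta>: "\<theta> \<in> ConBI n" and \<phi>: "\<phi> \<in> ConBI n" and \<psi>: "\<psi> \<in> ConBI n"
    and ab: "(a, b) \<in> \<theta>" "a \<le> b" and az: "(a, z) \<in> cong_join \<phi> \<psi>"
  shows "(a, inf (sup z a) b) \<in> cong_join (\<theta> \<inter> \<phi>) (\<theta> \<inter> \<psi>)"
  using az unfolding cong_join_def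
proof (induction rule: rtrancl_induct)
  case base
  then show ?case using ab by (simp add: inf_absorb1)
next
  case (step y z)
  have to_a: "(inf (sup w a) b, a) \<in> \<theta>" for w
    using ConBI_inf[OF \<theta> ConBI_refl[OF \<theta>] ConBI_sym[OF \<theta> ab(1)], of "sup w a"]
    by (simp add: inf_absorb2)
  have "(inf (sup y a) b, inf (sup z a) b) \<in> \<theta>"
    using ConBI_trans[OF \<theta> to_a ConBI_sym[OF \<theta> to_a]] .
  moreover have "(inf (sup y a) b, inf (sup z a) b) \<in> \<chi>" if "\<chi> \<in> ConBI n" "(y, z) \<in> \<chi>" for \<chi>
    using ConBI_inf[OF that(1) ConBI_sup[OF that ConBI_refl[OF that(1)]] ConBI_refl[OF that(1)]] .
  then have "(inf (sup y a) b, inf (sup z a) b) \<in> \<phi> \<union> \<psi>"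
    using step.hyps(2) \<phi> \<psi> by blast
  ultimately show ?case using step.IH by (blast intro: rtrancl_into_rtrancl)
qed

lemma ConBI_distrib:
  assumes \<theta>: "\<theta> \<in> ConBI n" and \<phi>: "\<phi> \<in> ConBI n" and \<psi>: "\<psi> \<in> ConBI n"
  shows "\<theta> \<inter> cong_join \<phi> \<psi> = cong_join (\<theta> \<inter> \<phi>) (\<theta> \<inter> \<psi>)"
proof
  show "cong_join (\<theta> \<inter> \<phi>) (\<theta> \<inter> \<psi>) \<subseteq> \<theta> \<inter> cong_join \<phi> \<psi>"
    by (rule cong_join_least[OF ConBI_Int[OF \<theta> ConBI_cong_join[OF \<phi> \<psi>]]])
      (auto simp: cong_join_def)
  show "\<theta> \<inter> cong_join \<phi> \<psi> \<subseteq> cong_join (\<theta> \<inter> \<phi>) (\<theta> \<inter> \<psi>)"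
  proof clarify
    fix a b assume "(a, b) \<in> \<theta>" "(a, b) \<in> cong_join \<phi> \<psi>"
    then have "(inf a b, sup a b) \<in> \<theta>" "(inf a b, sup a b) \<in> cong_join \<phi> \<psi>"
      using ConBI_iff_inf_sup[OF \<theta>] ConBI_iff_inf_sup[OF ConBI_cong_join[OF \<phi> \<psi>]] by blast+
    from cong_join_projection[OF \<theta> \<phi> \<psi> this(1) _ this(2)]
    have "(inf a b, sup a b) \<in> cong_join (\<theta> \<inter> \<phi>) (\<theta> \<inter> \<psi>)"
      by (simp add: inf.coboundedI1 sup_absorb1)
    then show "(a, b) \<in> cong_join (\<theta> \<inter> \<phi>) (\<theta> \<inter> \<psi>)"
      using ConBI_iff_inf_sup[OF ConBI_cong_join[OF ConBI_Int[OF \<theta> \<phi>] ConBI_Int[OF \<theta> \<psi>]]] by blast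
  qed
qed

section \<open>The complement of a congruence of a modular lattice\<close>

lemma modular_cancel:
  assumes "modular_lattice TYPE('a::lattice)"
    and "(u::'a) \<le> v" "inf u y = inf v y" "sup u y = sup v y"
  shows "u = v"
proof -
  have "sup u (inf y v) = inf (sup u y) v"
    using assms(1,2) unfolding modular_lattice_def by blast
  moreover have "sup u (inf y v) = u" using assms(3) by (metis inf_commute inf_le1 sup_absorb1)
  moreover have "inf (sup u y) v = v" using assms(4) by (simp add: inf_absorb2)
  ultimately show ?thesis by simp
qed

lemma i_lattice_invD:
  assumes "i_lattice_inv n"
  shows i_lattice_inv_involution: "n (n a) = a"
    and i_lattice_inv_antimono: "a \<le> b \<Longrightarrow> n b \<le> n a"
  using assms unfolding i_lattice_inv_def by auto

definition collapse_free :: "('a::order \<times> 'a) set \<Rightarrow> ('a \<times> 'a) set" where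
  "collapse_free \<theta> = {(u, v). u \<le> v \<and> (\<forall>p q. u \<le> p \<and> p \<le> q \<and> q \<le> v \<and> (p, q) \<in> \<theta> \<longrightarrow> p = q)}"

lemma collapse_freeI:
  "u \<le> v \<Longrightarrow> (\<And>p q. u \<le> p \<Longrightarrow> p \<le> q \<Longrightarrow> q \<le> v \<Longrightarrow> (p, q) \<in> \<theta> \<Longrightarrow> p = q)
    \<Longrightarrow> (u, v) \<in> collapse_free \<theta>"
  unfolding collapse_free_def by blast

lemma collapse_freeD:
  "(u, v) \<in> collapse_free \<theta> \<Longrightarrow> u \<le> p \<Longrightarrow> p \<le> q \<Longrightarrow> q \<le> v \<Longrightarrow> (p, q) \<in> \<theta> \<Longrightarrow> p = q"
  unfolding collapse_free_def by blast

lemma collapse_free_le: "(u, v) \<in> collapse_free \<theta> \<Longrightarrow> u \<le> v"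
  unfolding collapse_free_def by blast

lemma collapse_free_subinterval:
  "(u, v) \<in> collapse_free \<theta> \<Longrightarrow> u \<le> u' \<Longrightarrow> u' \<le> v' \<Longrightarrow> v' \<le> v \<Longrightarrow> (u', v') \<in> collapse_free \<theta>"
  unfolding collapse_free_def by (auto intro: order_trans)

definition cong_complement :: "('a::lattice \<times> 'a) set \<Rightarrow> ('a \<times> 'a) set" where
  "cong_complement \<theta> = {(x, y). (inf x y, sup x y) \<in> collapse_free \<theta>}"

lemma cong_complementI_within:
  assumes "(u, v) \<in> collapse_free \<theta>" and "x \<in> {u..v}" "y \<in> {u..v}"
  shows "(x, y) \<in> cong_complement \<theta>"
proof -
  have "u \<le> inf x y" "inf x y \<le> sup x y" "sup x y \<le> v"
    using assms(2,3) by (auto intro: le_supI1)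
  then show ?thesis
    unfolding cong_complement_def using collapse_free_subinterval[OF assms(1)] by blast
qed

context
  fixes n :: "'a::lattice \<Rightarrow> 'a" and \<theta> :: "('a \<times> 'a) set"
  assumes modular: "modular_lattice TYPE('a)" and \<theta>: "\<theta> \<in> ConBI n"
begin

lemma collapse_free_sup:
  assumes uv: "(u, v) \<in> collapse_free \<theta>"
  shows "(sup u w, sup v w) \<in> collapse_free \<theta>"
proof (rule collapse_freeI)
  have "u \<le> v" using collapse_free_le[OF uv] .
  then show "sup u w \<le> sup v w" by (simp add: le_supI1)
  fix p q assume pq: "sup u w \<le> p" "p \<le> q" "q \<le> sup v w" "(p, q) \<in> \<theta>"
  show "p = q"
  proof (rule modular_cancel[OF modular \<open>p \<le> q\<close>])
    show "inf p v = inf q v"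
      using collapse_freeD[OF uv _ inf_mono[OF pq(2) order_refl] _ ConBI_inf[OF \<theta> pq(4) ConBI_refl[OF \<theta>]]]
        pq(1) \<open>u \<le> v\<close> by simp
    have "q \<le> sup p v" using pq(1,3) by (meson le_sup_iff order_trans sup_ge1 sup_ge2 sup_least)
    then show "sup p v = sup q v" using pq(2) by (simp add: antisym le_supI1)
  qed
qed

lemma collapse_free_inf:
  assumes uv: "(u, v) \<in> collapse_free \<theta>"
  shows "(inf u w, inf v w) \<in> collapse_free \<theta>"
proof (rule collapse_freeI)
  have "u \<le> v" using collapse_free_le[OF uv] .
  then show "inf u w \<le> inf v w" by (simp add: le_infI1)
  fix p q assume pq: "inf u w \<le> p" "p \<le> q" "q \<le> inf v w" "(p, q) \<in> \<theta>"
  show "p = q"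
  proof (rule modular_cancel[OF modular \<open>p \<le> q\<close>])
    show "sup p u = sup q u"
      using collapse_freeD[OF uv _ sup_mono[OF pq(2) order_refl] _ ConBI_sup[OF \<theta> pq(4) ConBI_refl[OF \<theta>]]]
        pq(3) \<open>u \<le> v\<close> by simp
    have "inf q u \<le> p" using pq(1,3) by (meson le_inf_iff order_trans inf_le1 inf_le2 inf_greatest)
    then show "inf p u = inf q u" using pq(2) by (simp add: antisym le_infI1)
  qed
qed

lemma collapse_free_concat:
  assumes uv: "(u, v) \<in> collapse_free \<theta>" and vw: "(v, w) \<in> collapse_free \<theta>"
  shows "(u, w) \<in> collapse_free \<theta>"
proof (rule collapse_freeI)
  have "u \<le> v" "v \<le> w" using collapse_free_le uv vw by blast+
  then show "u \<le> w" by (rule order_trans)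
  fix p q assume pq: "u \<le> p" "p \<le> q" "q \<le> w" "(p, q) \<in> \<theta>"
  show "p = q"
  proof (rule modular_cancel[OF modular \<open>p \<le> q\<close>])
    show "inf p v = inf q v"
      using collapse_freeD[OF uv _ inf_mono[OF pq(2) order_refl] _ ConBI_inf[OF \<theta> pq(4) ConBI_refl[OF \<theta>]]]
        pq(1) \<open>u \<le> v\<close> by simp
    show "sup p v = sup q v"
      using collapse_freeD[OF vw _ sup_mono[OF pq(2) order_refl] _ ConBI_sup[OF \<theta> pq(4) ConBI_refl[OF \<theta>]]]
        pq(3) \<open>v \<le> w\<close> by simp
  qed
qed

lemma cong_complement_sup:
  assumes "(x, y) \<in> cong_complement \<theta>"
  shows "(sup x c, sup y c) \<in> cong_complement \<theta>"
proof (rule cong_complementI_within[OF collapse_free_sup])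
  show "(inf x y, sup x y) \<in> collapse_free \<theta>" using assms by (simp add: cong_complement_def)
  show "sup x c \<in> {sup (inf x y) c..sup (sup x y) c}" "sup y c \<in> {sup (inf x y) c..sup (sup x y) c}"
    by (simp_all add: le_supI1 le_supI2)
qed

lemma cong_complement_inf:
  assumes "(x, y) \<in> cong_complement \<theta>"
  shows "(inf x c, inf y c) \<in> cong_complement \<theta>"
proof (rule cong_complementI_within[OF collapse_free_inf])
  show "(inf x y, sup x y) \<in> collapse_free \<theta>" using assms by (simp add: cong_complement_def)
  show "inf x c \<in> {inf (inf x y) c..inf (sup x y) c}" "inf y c \<in> {inf (inf x y) c..inf (sup x y) c}"
    by (simp_all add: le_infI1 le_infI2)
qed

lemma cong_complement_trans:
  assumes "(x, y) \<in> cong_complement \<theta>" and "(y, z) \<in> cong_complement \<theta>"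
  shows "(x, z) \<in> cong_complement \<theta>"
proof -
  have xy: "(inf x y, sup x y) \<in> collapse_free \<theta>" and yz: "(inf y z, sup y z) \<in> collapse_free \<theta>"
    using assms by (auto simp: cong_complement_def)
  have "(inf (inf x y) z, inf y z) \<in> collapse_free \<theta>"
    using collapse_free_inf[OF collapse_free_subinterval[OF xy order_refl inf_le2 sup_ge2]] by simp
  moreover have "(inf y z, sup y z) \<in> collapse_free \<theta>" by (fact yz)
  moreover have "(sup y z, sup (sup x y) z) \<in> collapse_free \<theta>"
    using collapse_free_sup[OF collapse_free_subinterval[OF xy inf_le2 sup_ge2 order_refl]] by simp
  ultimately have "(inf (inf x y) z, sup (sup x y) z) \<in> collapse_free \<theta>"
    by (blast intro: collapse_free_concat)
  then show ?thesis
    by (rule cong_complementI_within) (auto intro: le_infI1 le_supI1)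
qed

end

lemma cong_complement_refl: "(x, x) \<in> cong_complement \<theta>"
  unfolding cong_complement_def collapse_free_def by (auto intro: antisym)

lemma cong_complement_sym: "(x, y) \<in> cong_complement \<theta> \<Longrightarrow> (y, x) \<in> cong_complement \<theta>"
  unfolding cong_complement_def by (simp add: inf_commute sup_commute)

lemma collapse_free_inv:
  assumes inv: "i_lattice_inv n" and \<theta>: "\<theta> \<in> ConBI n" and uv: "(u, v) \<in> collapse_free \<theta>"
  shows "(n v, n u) \<in> collapse_free \<theta>"
proof (rule collapse_freeI)
  note n_n = i_lattice_inv_involution[OF inv] and n_anti = i_lattice_inv_antimono[OF inv]
  show "n v \<le> n u" using n_anti[OF collapse_free_le[OF uv]] .
  fix p q assume pq: "n v \<le> p" "p \<le> q" "q \<le> n u" "(p, q) \<in> \<theta>"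
  have "n q = n p"
    using collapse_freeD[OF uv _ n_anti[OF pq(2)] _ ConBI_sym[OF \<theta> ConBI_inv[OF \<theta> pq(4)]]]
      n_anti[OF pq(1)] n_anti[OF pq(3)] n_n by simp
  then show "p = q" by (metis n_n)
qed

lemma cong_complement_inv:
  assumes inv: "i_lattice_inv n" and \<theta>: "\<theta> \<in> ConBI n" and xy: "(x, y) \<in> cong_complement \<theta>"
  shows "(n x, n y) \<in> cong_complement \<theta>"
proof (rule cong_complementI_within[OF collapse_free_inv[OF inv \<theta>]])
  note n_anti = i_lattice_inv_antimono[OF inv]
  show "(inf x y, sup x y) \<in> collapse_free \<theta>" using xy by (simp add: cong_complement_def)
  show "n x \<in> {n (sup x y)..n (inf x y)}" "n y \<in> {n (sup x y)..n (inf x y)}"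
    by (simp_all add: n_anti)
qed

lemma ConBI_cong_complement:
  fixes n :: "'a::lattice \<Rightarrow> 'a"
  assumes "i_lattice_inv n" and "modular_lattice TYPE('a)" and "\<theta> \<in> ConBI n"
  shows "cong_complement \<theta> \<in> ConBI n"
proof (rule ConBI_intro)
  show "refl (cong_complement \<theta>)" by (simp add: refl_on_def cong_complement_refl)
  show "sym (cong_complement \<theta>)" by (rule symI) (rule cong_complement_sym)
  show "trans (cong_complement \<theta>)" by (rule transI) (rule cong_complement_trans[OF assms(2,3)])
qed (use cong_complement_sup[OF assms(2,3)] cong_complement_inf[OF assms(2,3)]
    cong_complement_inv[OF assms(1,3)] in blast)+

lemma Int_cong_complement:
  assumes \<theta>: "\<theta> \<in> ConBI n"
  shows "\<theta> \<inter> cong_complement \<theta> = Id"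
proof (intro equalityI subsetI)
  fix r assume "r \<in> \<theta> \<inter> cong_complement \<theta>"
  then obtain x y where r: "r = (x, y)" "(inf x y, sup x y) \<in> \<theta>"
      "(inf x y, sup x y) \<in> collapse_free \<theta>"
    using ConBI_iff_inf_sup[OF \<theta>] by (auto simp: cong_complement_def)
  then have "inf x y = sup x y" using collapse_freeD[OF r(3) order_refl _ order_refl r(2)]
    by (simp add: le_supI1)
  then have "x = y" by (metis inf.cobounded1 inf.cobounded2 sup.cobounded1 sup.cobounded2 antisym order_trans)
  then show "r \<in> Id" using r by simp
qed (auto intro: ConBI_refl[OF \<theta>] cong_complement_refl)

lemma cong_join_cong_complement:
  fixes n :: "'a::{lattice, finite} \<Rightarrow> 'a"
  assumes inv: "i_lattice_inv n" and modular: "modular_lattice TYPE('a)" and \<theta>: "\<theta> \<in> ConBI n"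
  shows "cong_join \<theta> (cong_complement \<theta>) = UNIV"
proof -
  let ?\<chi> = "cong_join \<theta> (cong_complement \<theta>)"
  have \<chi>: "?\<chi> \<in> ConBI n"
    using ConBI_cong_join[OF \<theta> ConBI_cong_complement[OF inv modular \<theta>]] .
  have interval: "(x, y) \<in> ?\<chi>" if "x \<le> y" for x y
    using that
  proof (induction "card {x..y}" arbitrary: x y rule: less_induct)
    case less
    show ?case
    proof (cases "(x, y) \<in> collapse_free \<theta>")
      case True
      then have "(x, y) \<in> cong_complement \<theta>"
        using less.prems by (intro cong_complementI_within) auto
      then show ?thesis unfolding cong_join_def by blast
    next
      case False
      then obtain p q where pq: "x \<le> p" "p \<le> q" "q \<le> y" "(p, q) \<in> \<theta>" "p \<noteq> q"
        using less.prems unfolding collapse_free_def by blast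
      have "q \<notin> {x..p}" "p \<notin> {q..y}" using pq by auto
      then have "{x..p} \<subset> {x..y}" "{q..y} \<subset> {x..y}"
        using pq by (auto intro: order_trans)
      then have "card {x..p} < card {x..y}" "card {q..y} < card {x..y}"
        by (simp_all add: psubset_card_mono)
      then have "(x, p) \<in> ?\<chi>" "(q, y) \<in> ?\<chi>" using less.hyps pq by blast+
      moreover have "(p, q) \<in> ?\<chi>" using pq(4) unfolding cong_join_def by blast
      ultimately show ?thesis using ConBI_trans[OF \<chi>] by blast
    qed
  qed
  have "(x, y) \<in> ?\<chi>" for x y
    using interval[of "inf x y" "sup x y"] ConBI_iff_inf_sup[OF \<chi>] by (simp add: le_supI1)
  then show ?thesis by auto
qed

lemma boolean_set_lattice_ConBI:
  fixes n :: "'a::{lattice, finite} \<Rightarrow> 'a"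
  assumes "i_lattice_inv n" and "modular_lattice TYPE('a)"
  shows "boolean_set_lattice (ConBI n) cong_join Id UNIV"
proof
  fix x y z assume x: "x \<in> ConBI n"
  show "Id \<subseteq> x \<and> x \<subseteq> UNIV" using ConBI_refl[OF x] by auto
  show "\<exists>y\<in>ConBI n. x \<inter> y = Id \<and> cong_join x y = UNIV"
    using ConBI_cong_complement[OF assms x] Int_cong_complement[OF x]
      cong_join_cong_complement[OF assms x] by blast
  assume y: "y \<in> ConBI n"
  show "x \<inter> y \<in> ConBI n" using ConBI_Int[OF x y] .
  show "is_lub_in (ConBI n) x y (cong_join x y)" using is_lub_in_cong_join[OF x y] .
  assume "z \<in> ConBI n"
  then show "x \<inter> cong_join y z = cong_join (x \<inter> y) (x \<inter> z)" using ConBI_distrib[OF x y] by blast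
qed (rule ConBI_Id, rule ConBI_UNIV)

theorem corollary4p9:
  fixes n :: "'a::{lattice, finite} \<Rightarrow> 'a"
  assumes "i_lattice_inv n"
    and "modular_lattice TYPE('a)"
  shows "boolean_lattice_on (ConBI n) \<and> (\<exists>k::nat. card (ConBI n) = 2 ^ k)"
proof -
  note lattice = boolean_set_lattice_ConBI[OF assms]
  show ?thesis
    using boolean_set_lattice.boolean_lattice_on[OF lattice] card_boolean_set_lattice[OF lattice]
    by simp
qed

end
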